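(* Let $0<q<1$ and $n\ge1$. For every $\lambda\in U(1)$ the formulas \begin{align*} \pi_\lambda(y_i)|\mathbf{k}\rangle &=q^{k_1+\ldots+k_{i-1}}\sqrt{1-q^{2k_i}}\,|\mathbf{k}-\mathbf{e}_i\rangle \qquad (1\leq i\leq n-1),\\ \pi_\lambda(y_n)|\mathbf{k}\rangle &=q^{k_1+\ldots+k_{n-1}}\sqrt{1-q^{4k_n}}\,|\mathbf{k}-\mathbf{e}_n\rangle ,\\ \pi_\lambda(y_{n+1})|\mathbf{k}\rangle &=\lambda\, q^{|\mathbf{k}|+k_n}|\mathbf{k}\rangle , \end{align*} define an irreducible bounded $*$-representation $\pi_\lambda$ of $\mathcal{A}(\Sigma^{2n+1}_q)$ on $\ell^2(\mathbb{N}^n)$. Here $\mathbf{k}=(k_1,\ldots,k_n)\in\mathbb{N}^n$ ($\mathbb{N}=\{0,1,2,\dots\}$), $|\mathbf{k}|=k_1+\dots+k_n$, $\{|\mathbf{k}\rangle\}$ is the canonical orthonormal basis of $\ell^2(\mathbb{N}^n)$, $\mathbf{e}_i$ is the $i$-th standard basis vector of $\mathbb{Z}^n$, and $|\mathbf{k}\rangle:=0$ if some component of $\mathbf{k}$ is negative.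
   Context: Let $0<q<1$, $n\ge1$. $\mathcal{A}(S^{4n-1}_q)$ is the complex unital $*$-algebra generated by $x_1,\dots,x_n,y_1,\dots,y_n$ and their adjoints subject to: $x_ix_j=q^{-1}x_jx_i$ ($i<j$); $y_iy_j=q^{-1}y_jy_i$ ($i>j$); $x_iy_j=q^{-1}y_jx_i$ ($i\ne j$); $y_ix_i=q^2x_iy_i+(q^2-1)\sum_{k=1}^{i-1}q^{i-k}x_ky_k$; $x_ix_i^*=x_i^*x_i+(1-q^2)\sum_{k=1}^{i-1}x_k^*x_k$; $y_iy_i^*=y_i^*y_i+(1-q^2)\{q^{2(n+1-i)}x_i^*x_i+\sum_{k=1}^n x_k^*x_k+\sum_{k=i+1}^n y_k^*y_k\}$; $x_iy_i^*=q^2y_i^*x_i$; $x_ix_j^*=qx_j^*x_i$ ($i\ne j$); $y_iy_j^*=qy_j^*y_i-(q^2-1)q^{2n+2-i-j}x_i^*x_j$ ($i\neq j$); $x_iy_j^*=qy_j^*x_i$ ($i<j$); $x_iy_j^*=qy_j^*x_i+(q^2-1)q^{i-j}y_i^*x_j$ ($i>j$); and $\sum_{i=1}^n(x_i^*x_i+y_i^*y_i)=1$. $\mathcal{A}(\Sigma^{2n+1}_q)$ is the quotient of $\mathcal{A}(S^{4n-1}_q)$ by the two-sided $*$-ideal generated by $x_1,\dots,x_{n-1}$; in it, $y_1,\dots,y_n$ denote the images of $y_1,\dots,y_n$ and $y_{n+1}$ denotes the image of $x_n$. In this quotient, $y_{n+1}$ is normal and the following hold (with their adjoints): $y_iy_j=q^{-1}y_jy_i$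 and $y_i^*y_j=q^{-1}y_jy_i^*$ for $i>j$, $(i,j)\neq(n+1,n)$; $y_{n+1}y_n=q^{-2}y_ny_{n+1}$, $y_{n+1}^*y_n=q^{-2}y_ny_{n+1}^*$; $[y_i,y_i^*]=(1-q^2)\sum_{k=i+1}^{n+1}y_k^*y_k$ for $i\neq n$; $[y_n,y_n^*]=(1-q^4)y_{n+1}^*y_{n+1}$; $\sum_{i=1}^{n+1}y_i^*y_i=1$. *)

theory Defs
  imports "HOL-Analysis.Analysis"
begin

text \<open>Multi-indices k = (k_1,...,k_n) are modelled as
  functions nat => nat vanishing outside {1..n}; vectors are functions from
  multi-indices to complex numbers that vanish outside the index set and are
  square summable.  Operators are functions on vectors; only their behaviour on
  l2 vectors matters.\<close>

type_synonym mindex = "nat \<Rightarrow> nat"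
type_synonym vec = "mindex \<Rightarrow> complex"
type_synonym op = "vec \<Rightarrow> vec"

definition idx :: "nat \<Rightarrow> mindex set" where
  "idx n = {k. \<forall>j. j \<notin> {1..n} \<longrightarrow> k j = 0}"

definition l2 :: "nat \<Rightarrow> vec set" where
  "l2 n = {f. (\<forall>k. k \<notin> idx n \<longrightarrow> f k = 0) \<and> (\<lambda>k. (cmod (f k))\<^sup>2) summable_on idx n}"

definition l2_inner :: "nat \<Rightarrow> vec \<Rightarrow> vec \<Rightarrow> complex" where
  "l2_inner n f g = infsum (\<lambda>k. cnj (f k) * g k) (idx n)"

definition l2_norm :: "nat \<Rightarrow> vec \<Rightarrow> real" where
  "l2_norm n f = sqrt (infsum (\<lambda>k. (cmod (f k))\<^sup>2) (idx n))"

definition ket :: "mindex \<Rightarrow> vec" where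
  "ket k = (\<lambda>j. if j = k then 1 else 0)"

definition zero_vec :: vec where
  "zero_vec = (\<lambda>_. 0)"

definition ket_minus :: "mindex \<Rightarrow> nat \<Rightarrow> vec" where
  "ket_minus k i = (if k i = 0 then zero_vec else ket (k(i := k i - 1)))"

definition scal :: "complex \<Rightarrow> vec \<Rightarrow> vec" where
  "scal c v = (\<lambda>j. c * v j)"

definition bounded_op :: "nat \<Rightarrow> op \<Rightarrow> bool" where
  "bounded_op n A \<longleftrightarrow>
     (\<forall>f\<in>l2 n. A f \<in> l2 n) \<and>
     (\<forall>f\<in>l2 n. \<forall>g\<in>l2 n. \<forall>a b. A (\<lambda>k. a * f k + b * g k) = (\<lambda>k. a * A f k + b * A g k)) \<and>
     (\<exists>C. \<forall>f\<in>l2 n. l2_norm n (A f) \<le> C * l2_norm n f)"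

definition is_adjoint :: "nat \<Rightarrow> op \<Rightarrow> op \<Rightarrow> bool" where
  "is_adjoint n A B \<longleftrightarrow> (\<forall>f\<in>l2 n. \<forall>g\<in>l2 n. l2_inner n (A f) g = l2_inner n f (B g))"

definition closed_subspace :: "nat \<Rightarrow> vec set \<Rightarrow> bool" where
  "closed_subspace n V \<longleftrightarrow> V \<subseteq> l2 n \<and> zero_vec \<in> V \<and>
     (\<forall>f\<in>V. \<forall>g\<in>V. \<forall>a b. (\<lambda>k. a * f k + b * g k) \<in> V) \<and>
     (\<forall>g\<in>l2 n. (\<forall>e>0. \<exists>f\<in>V. l2_norm n (\<lambda>k. f k - g k) < e) \<longrightarrow> g \<in> V)"

text \<open>Operators X_i (images of x_i in A(S^{4n-1}_q)) obtained from the images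
  T_1..T_{n+1} of y_1..y_{n+1} of A(Sigma^{2n+1}_q):
  x_i maps to 0 for i < n and x_n maps to y_{n+1}.\<close>
definition Xop :: "nat \<Rightarrow> (nat \<Rightarrow> op) \<Rightarrow> nat \<Rightarrow> op" where
  "Xop n T i = (if i = n then T (n + 1) else (\<lambda>_. zero_vec))"

text \<open>The defining relations of A(S^{4n-1}_q), imposed on operators X_i, Y_i with
  adjoints XS_i, YS_i (i = 1..n), evaluated on all l2 vectors f and all indices m.\<close>
definition sphere_relations ::
  "nat \<Rightarrow> real \<Rightarrow> (nat \<Rightarrow> op) \<Rightarrow> (nat \<Rightarrow> op) \<Rightarrow> (nat \<Rightarrow> op) \<Rightarrow> (nat \<Rightarrow> op) \<Rightarrow> bool" where
  "sphere_relations n q X Y XS YS \<longleftrightarrow>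
   (let Q = complex_of_real q in
   (\<forall>f\<in>l2 n. \<forall>m.
     (\<forall>i\<in>{1..n}. \<forall>j\<in>{1..n}. i < j \<longrightarrow> X i (X j f) m = inverse Q * X j (X i f) m) \<and>
     (\<forall>i\<in>{1..n}. \<forall>j\<in>{1..n}. i > j \<longrightarrow> Y i (Y j f) m = inverse Q * Y j (Y i f) m) \<and>
     (\<forall>i\<in>{1..n}. \<forall>j\<in>{1..n}. i \<noteq> j \<longrightarrow> X i (Y j f) m = inverse Q * Y j (X i f) m) \<and>
     (\<forall>i\<in>{1..n}. Y i (X i f) m = Q\<^sup>2 * X i (Y i f) m
         + (Q\<^sup>2 - 1) * (\<Sum>k = 1..i - 1. Q ^ (i - k) * X k (Y k f) m)) \<and>
     (\<forall>i\<in>{1..n}. X i (XS i f) m = XS i (X i f) m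
         + (1 - Q\<^sup>2) * (\<Sum>k = 1..i - 1. XS k (X k f) m)) \<and>
     (\<forall>i\<in>{1..n}. Y i (YS i f) m = YS i (Y i f) m
         + (1 - Q\<^sup>2) * (Q ^ (2 * (n + 1 - i)) * XS i (X i f) m
                         + (\<Sum>k = 1..n. XS k (X k f) m)
                         + (\<Sum>k = i + 1..n. YS k (Y k f) m))) \<and>
     (\<forall>i\<in>{1..n}. X i (YS i f) m = Q\<^sup>2 * YS i (X i f) m) \<and>
     (\<forall>i\<in>{1..n}. \<forall>j\<in>{1..n}. i \<noteq> j \<longrightarrow> X i (XS j f) m = Q * XS j (X i f) m) \<and>
     (\<forall>i\<in>{1..n}. \<forall>j\<in>{1..n}. i \<noteq> j \<longrightarrow> Y i (YS j f) m = Q * YS j (Y i f) m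
         - (Q\<^sup>2 - 1) * Q ^ (2 * n + 2 - i - j) * XS i (X j f) m) \<and>
     (\<forall>i\<in>{1..n}. \<forall>j\<in>{1..n}. i < j \<longrightarrow> X i (YS j f) m = Q * YS j (X i f) m) \<and>
     (\<forall>i\<in>{1..n}. \<forall>j\<in>{1..n}. i > j \<longrightarrow> X i (YS j f) m = Q * YS j (X i f) m
         + (Q\<^sup>2 - 1) * Q ^ (i - j) * YS i (X j f) m) \<and>
     (\<Sum>i = 1..n. XS i (X i f) m + YS i (Y i f) m) = f m))"

end

theory Submission
  imports Defs
begin

text \<open>For \<open>i \<le> n\<close> the operator \<open>\<pi>(y\<^sub>i)\<close> is a weighted lowering shift in the \<open>i\<close>-th coordinate
  with weights \<open>c\<^sub>i(k) \<in> [0, 1]\<close>, and \<open>\<pi>(y\<^sub>n\<^sub>+\<^sub>1)\<close> is diagonal; so all of them are bounded, with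
  the raising shifts and the conjugate diagonal as adjoints. Evaluated at a basis index \<open>m\<close>,
  every defining relation becomes an identity between weights at \<open>m\<close> and at \<open>m \<plusminus> e\<^sub>j\<close>; the two
  relations containing sums reduce to the telescoping identity
  sum_{k=i+1..n} c_k(m)^2 + q^(2(|m| + m_n)) = q^(2(m_1 + ... + m_i)).

  Irreducibility: lowering operators move a nonzero coefficient of a vector in a nonzero
  invariant closed subspace to the vacuum \<open>|0\<rangle>\<close>. The eigenvalue of \<open>\<pi>(y\<^sub>n\<^sub>+\<^sub>1)\<close> has modulus
  1 at \<open>|0\<rangle>\<close> and at most \<open>q\<close> elsewhere, so its normalised powers converge to the projection
  onto \<open>|0\<rangle>\<close>, which therefore lies in the subspace. Raising operators then produce every
  \<open>|k\<rangle>\<close>, and the basis vectors span a dense subspace.\<close>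

section \<open>Multi-indices and square-summable vectors\<close>

abbreviation succ_at :: "nat \<Rightarrow> mindex \<Rightarrow> mindex" where
  "succ_at i k \<equiv> k(i := Suc (k i))"

abbreviation pred_at :: "nat \<Rightarrow> mindex \<Rightarrow> mindex" where
  "pred_at i k \<equiv> k(i := k i - 1)"

lemma fun_upd_in_idx: "k \<in> idx n \<Longrightarrow> i \<in> {1..n} \<Longrightarrow> k(i := v) \<in> idx n"
  by (auto simp: idx_def)

lemma pred_at_in_idx: "k \<in> idx n \<Longrightarrow> pred_at i k \<in> idx n"
  by (auto simp: idx_def)

lemma succ_pred_at: "0 < k i \<Longrightarrow> succ_at i (pred_at i k) = k"
  by auto

lemma inj_succ_at: "inj (succ_at i)"
  by (rule injI) (metis fun_upd_idem_iff fun_upd_upd diff_Suc_1 fun_upd_same)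

lemma succ_at_image_idx: "i \<in> {1..n} \<Longrightarrow> succ_at i ` idx n = {k \<in> idx n. 0 < k i}"
proof (intro equalityI subsetI)
  fix k assume "i \<in> {1..n}" "k \<in> succ_at i ` idx n"
  then show "k \<in> {k \<in> idx n. 0 < k i}" by (auto intro: fun_upd_in_idx)
next
  fix k assume "k \<in> {k \<in> idx n. 0 < k i}"
  then show "k \<in> succ_at i ` idx n"
    by (metis (mono_tags, lifting) image_eqI mem_Collect_eq pred_at_in_idx succ_pred_at)
qed

lemma idx_nonzero_component:
  assumes "k \<in> idx n" "k \<noteq> (\<lambda>_. 0)"
  obtains j where "j \<in> {1..n}" "0 < k j"
proof -
  obtain j where "k j \<noteq> 0" using assms(2) by auto
  moreover from this have "j \<in> {1..n}" using assms(1) by (auto simp: idx_def)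
  ultimately show ?thesis using that by auto
qed

lemma sum_fun_upd_in:
  "finite A \<Longrightarrow> l \<in> A \<Longrightarrow> sum (k(l := v)) A + k l = sum k A + (v :: 'a :: comm_monoid_add)"
  by (simp add: sum.remove[of A l] sum.cong[of "A - {l}" "A - {l}" "k(l := v)" k] ac_simps)

lemma sum_fun_upd_notin: "l \<notin> A \<Longrightarrow> sum (k(l := v)) A = sum k A"
  by (rule sum.cong) auto

lemma sum_upto_last:
  "1 \<le> (i :: nat) \<Longrightarrow> (\<Sum>j = 1..i. m j) = (\<Sum>j = 1..i - 1. m j) + (m i :: 'a :: comm_monoid_add)"
  by (cases i) (simp_all add: sum.cl_ivl_Suc)

lemma sum_pred_at_less:
  assumes "j \<in> {1..n}" "0 < k j"
  shows "(\<Sum>i = 1..n. pred_at j k i) < (\<Sum>i = 1..n. k i)"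
  using sum_fun_upd_in[of "{1..n}" j k "k j - 1"] assms by simp

lemma l2_vanishes: "f \<in> l2 n \<Longrightarrow> k \<notin> idx n \<Longrightarrow> f k = 0"
  by (auto simp: l2_def)

lemma l2_summable: "f \<in> l2 n \<Longrightarrow> (\<lambda>k. (cmod (f k))\<^sup>2) summable_on idx n"
  by (auto simp: l2_def)

lemma l2_dominated:
  assumes f: "f \<in> l2 n" and c: "0 \<le> c"
    and out: "\<And>k. k \<notin> idx n \<Longrightarrow> g k = 0"
    and le: "\<And>k. k \<in> idx n \<Longrightarrow> cmod (g k) \<le> c * cmod (f k)"
  shows "g \<in> l2 n" "l2_norm n g \<le> c * l2_norm n f"
proof -
  have le2: "(cmod (g k))\<^sup>2 \<le> c\<^sup>2 * (cmod (f k))\<^sup>2" if "k \<in> idx n" for k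
    using power_mono[OF le[OF that] norm_ge_zero, of 2] by (simp add: power_mult_distrib)
  have sf: "(\<lambda>k. c\<^sup>2 * (cmod (f k))\<^sup>2) summable_on idx n"
    using l2_summable[OF f] by (rule summable_on_cmult_right)
  have sg: "(\<lambda>k. (cmod (g k))\<^sup>2) summable_on idx n"
    by (rule summable_on_comparison_test[OF sf]) (use le2 in auto)
  then show "g \<in> l2 n" using out by (auto simp: l2_def)
  have "infsum (\<lambda>k. (cmod (g k))\<^sup>2) (idx n) \<le> infsum (\<lambda>k. c\<^sup>2 * (cmod (f k))\<^sup>2) (idx n)"
    by (rule infsum_mono[OF sg sf]) (use le2 in auto)
  also have "\<dots> = c\<^sup>2 * infsum (\<lambda>k. (cmod (f k))\<^sup>2) (idx n)"
    by (rule infsum_cmult_right) (use l2_summable[OF f] in auto)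
  finally show "l2_norm n g \<le> c * l2_norm n f"
    unfolding l2_norm_def using c by (metis real_sqrt_le_mono real_sqrt_mult real_sqrt_abs abs_of_nonneg)
qed

lemma l2_reindex:
  assumes f: "f \<in> l2 n" and h: "inj_on h (idx n)" "h ` idx n \<subseteq> idx n"
  defines "g \<equiv> \<lambda>k. if k \<in> idx n then f (h k) else 0"
  shows "g \<in> l2 n" "l2_norm n g \<le> l2_norm n f"
proof -
  let ?F = "\<lambda>k. (cmod (f k))\<^sup>2"
  have sF: "?F summable_on h ` idx n"
    by (rule summable_on_subset_banach[OF l2_summable[OF f] h(2)])
  have "(\<lambda>k. (cmod (g k))\<^sup>2) summable_on idx n \<longleftrightarrow> (?F \<circ> h) summable_on idx n"
    by (rule summable_on_cong) (simp add: g_def)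
  with sF summable_on_reindex[OF h(1)] show "g \<in> l2 n"
    by (auto simp: l2_def g_def)
  have "infsum (\<lambda>k. (cmod (g k))\<^sup>2) (idx n) = infsum (?F \<circ> h) (idx n)"
    by (rule infsum_cong) (simp add: g_def)
  also have "\<dots> = infsum ?F (h ` idx n)"
    by (rule infsum_reindex[OF h(1), symmetric])
  also have "\<dots> \<le> infsum ?F (idx n)"
    by (rule infsum_mono_neutral[OF sF l2_summable[OF f]]) (use h(2) in auto)
  finally show "l2_norm n g \<le> l2_norm n f"
    unfolding l2_norm_def by (rule real_sqrt_le_mono)
qed

lemma l2_pushforward:
  assumes f: "f \<in> l2 n" and h: "inj_on h (idx n)" "h ` idx n \<subseteq> idx n"
    and g_out: "\<And>k. k \<notin> h ` idx n \<Longrightarrow> g k = 0" and g_h: "\<And>k. k \<in> idx n \<Longrightarrow> g (h k) = f k"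
  shows "g \<in> l2 n" "l2_norm n g = l2_norm n f"
proof -
  let ?G = "\<lambda>k. (cmod (g k))\<^sup>2"
  have "?G summable_on idx n \<longleftrightarrow> ?G summable_on h ` idx n"
    by (rule summable_on_cong_neutral) (use g_out h(2) in auto)
  also have "\<dots> \<longleftrightarrow> (?G \<circ> h) summable_on idx n"
    by (rule summable_on_reindex[OF h(1)])
  also have "\<dots> \<longleftrightarrow> (\<lambda>k. (cmod (f k))\<^sup>2) summable_on idx n"
    by (rule summable_on_cong) (simp add: g_h)
  finally show "g \<in> l2 n"
    using l2_summable[OF f] g_out h(2) by (auto simp: l2_def)
  have "infsum ?G (idx n) = infsum ?G (h ` idx n)"
    by (rule infsum_cong_neutral) (use g_out h(2) in auto)
  also have "\<dots> = infsum (?G \<circ> h) (idx n)"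
    by (rule infsum_reindex[OF h(1)])
  also have "\<dots> = infsum (\<lambda>k. (cmod (f k))\<^sup>2) (idx n)"
    by (rule infsum_cong) (simp add: g_h)
  finally show "l2_norm n g = l2_norm n f"
    by (simp add: l2_norm_def)
qed

lemma ket_in_l2: "k \<in> idx n \<Longrightarrow> ket k \<in> l2 n"
proof -
  assume k: "k \<in> idx n"
  have "(\<lambda>j. (cmod (ket k j))\<^sup>2) summable_on {k}" by simp
  moreover have "(\<lambda>j. (cmod (ket k j))\<^sup>2) summable_on {k} \<longleftrightarrow> (\<lambda>j. (cmod (ket k j))\<^sup>2) summable_on idx n"
    by (rule summable_on_cong_neutral) (use k in \<open>auto simp: ket_def\<close>)
  ultimately show ?thesis using k by (auto simp: l2_def ket_def)
qed

lemma l2_scal: "f \<in> l2 n \<Longrightarrow> scal c f \<in> l2 n"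
  by (rule l2_dominated(1)[of f n "cmod c"]) (auto simp: scal_def norm_mult l2_vanishes)

section \<open>Weighted shift and multiplication operators\<close>

text \<open>The weight is attached to the upper of the two basis vectors involved:
  \<open>lower_op n a i |k\<rangle> = a k |k - e\<^sub>i\<rangle>\<close> and \<open>raise_op n a i |k\<rangle> = a (k + e\<^sub>i) |k + e\<^sub>i\<rangle>\<close>.\<close>

definition lower_op :: "nat \<Rightarrow> (mindex \<Rightarrow> real) \<Rightarrow> nat \<Rightarrow> op" where
  "lower_op n a i f = (\<lambda>k. if k \<in> idx n then of_real (a (succ_at i k)) * f (succ_at i k) else 0)"

definition raise_op :: "nat \<Rightarrow> (mindex \<Rightarrow> real) \<Rightarrow> nat \<Rightarrow> op" where
  "raise_op n a i f = (\<lambda>k. if k \<in> idx n \<and> 0 < k i then of_real (a k) * f (pred_at i k) else 0)"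

definition mult_op :: "nat \<Rightarrow> (mindex \<Rightarrow> complex) \<Rightarrow> op" where
  "mult_op n d f = (\<lambda>k. if k \<in> idx n then d k * f k else 0)"

lemma bounded_lower_op:
  assumes i: "i \<in> {1..n}" and a: "\<And>k. \<bar>a k\<bar> \<le> C"
  shows "bounded_op n (lower_op n a i)"
  unfolding bounded_op_def
proof (intro conjI ballI allI exI)
  fix f assume f: "f \<in> l2 n"
  let ?g = "\<lambda>k. if k \<in> idx n then f (succ_at i k) else 0"
  have "inj_on (succ_at i) (idx n)" "succ_at i ` idx n \<subseteq> idx n"
    using inj_succ_at succ_at_image_idx[OF i] by (auto intro: inj_on_subset)
  note g = l2_reindex[OF f this]
  have C: "0 \<le> C" using a[of undefined] by linarith
  have "\<And>k. k \<in> idx n \<Longrightarrow> cmod (lower_op n a i f k) \<le> C * cmod (?g k)"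
    using a by (simp add: lower_op_def norm_mult mult_right_mono)
  note dom = l2_dominated[OF g(1) C _ this]
  show "lower_op n a i f \<in> l2 n" by (rule dom(1)) (simp add: lower_op_def)
  have "l2_norm n (lower_op n a i f) \<le> C * l2_norm n ?g" by (rule dom(2)) (simp add: lower_op_def)
  also have "\<dots> \<le> C * l2_norm n f" by (rule mult_left_mono[OF g(2) C])
  finally show "l2_norm n (lower_op n a i f) \<le> C * l2_norm n f" .
qed (auto simp: lower_op_def algebra_simps)

lemma bounded_raise_op:
  assumes i: "i \<in> {1..n}" and a: "\<And>k. \<bar>a k\<bar> \<le> C"
  shows "bounded_op n (raise_op n a i)"
  unfolding bounded_op_def
proof (intro conjI ballI allI exI)
  fix f assume f: "f \<in> l2 n"
  let ?g = "\<lambda>k. if k \<in> idx n \<and> 0 < k i then f (pred_at i k) else 0"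
  have "?g \<in> l2 n" "l2_norm n ?g = l2_norm n f"
    by (rule l2_pushforward[OF f, of "succ_at i"];
        use inj_succ_at succ_at_image_idx[OF i] in \<open>auto intro: inj_on_subset\<close>)+
  note g = this
  have C: "0 \<le> C" using a[of undefined] by linarith
  have "\<And>k. k \<in> idx n \<Longrightarrow> cmod (raise_op n a i f k) \<le> C * cmod (?g k)"
    using a by (simp add: raise_op_def norm_mult mult_right_mono)
  note dom = l2_dominated[OF g(1) C _ this]
  show "raise_op n a i f \<in> l2 n" by (rule dom(1)) (simp add: raise_op_def)
  have "l2_norm n (raise_op n a i f) \<le> C * l2_norm n ?g" by (rule dom(2)) (simp add: raise_op_def)
  then show "l2_norm n (raise_op n a i f) \<le> C * l2_norm n f" by (simp only: g(2))
qed (auto simp: raise_op_def algebra_simps)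

lemma bounded_mult_op:
  assumes d: "\<And>k. cmod (d k) \<le> C"
  shows "bounded_op n (mult_op n d)"
  unfolding bounded_op_def
proof (intro conjI ballI allI exI)
  fix f assume f: "f \<in> l2 n"
  have C: "0 \<le> C" by (rule order_trans[OF norm_ge_zero d])
  have "\<And>k. k \<in> idx n \<Longrightarrow> cmod (mult_op n d f k) \<le> C * cmod (f k)"
    using d by (simp add: mult_op_def norm_mult mult_right_mono)
  note dom = l2_dominated[OF f C _ this]
  show "mult_op n d f \<in> l2 n" by (rule dom(1)) (simp add: mult_op_def)
  show "l2_norm n (mult_op n d f) \<le> C * l2_norm n f" by (rule dom(2)) (simp add: mult_op_def)
qed (auto simp: mult_op_def algebra_simps)

lemma adjoint_lower_raise_op:
  assumes i: "i \<in> {1..n}"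
  shows "is_adjoint n (lower_op n a i) (raise_op n a i)"
  unfolding is_adjoint_def
proof (intro ballI)
  fix f g :: vec
  let ?h = "\<lambda>k. cnj (f k) * raise_op n a i g k"
  have "l2_inner n f (raise_op n a i g) = infsum ?h (succ_at i ` idx n)"
    unfolding l2_inner_def by (rule infsum_cong_neutral) (auto simp: succ_at_image_idx[OF i] raise_op_def)
  also have "\<dots> = infsum (?h \<circ> succ_at i) (idx n)"
    by (rule infsum_reindex) (rule inj_on_subset[OF inj_succ_at subset_UNIV])
  also have "\<dots> = l2_inner n (lower_op n a i f) g"
    unfolding l2_inner_def
    by (rule infsum_cong) (auto simp: lower_op_def raise_op_def fun_upd_in_idx[OF _ i])
  finally show "l2_inner n (lower_op n a i f) g = l2_inner n f (raise_op n a i g)" by simp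
qed

lemma adjoint_mult_op: "is_adjoint n (mult_op n d) (mult_op n (\<lambda>k. cnj (d k)))"
  unfolding is_adjoint_def l2_inner_def by (intro ballI infsum_cong) (auto simp: mult_op_def)

lemma lower_op_ket:
  assumes "k \<in> idx n"
  shows "lower_op n a i (ket k) = scal (of_real (a k)) (ket_minus k i)"
proof (cases "k i = 0")
  case True
  then have "succ_at i m \<noteq> k" for m by (metis fun_upd_same nat.distinct(1))
  then show ?thesis using True by (auto simp: lower_op_def ket_def ket_minus_def scal_def zero_vec_def)
next
  case False
  then have "succ_at i m = k \<longleftrightarrow> m = pred_at i k" for m by auto
  then show ?thesis using False assms pred_at_in_idx[OF assms]
    by (auto simp: lower_op_def ket_def ket_minus_def scal_def)
qed

lemma raise_op_ket:
  assumes "k \<in> idx n" "i \<in> {1..n}"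
  shows "raise_op n a i (ket k) = scal (of_real (a (succ_at i k))) (ket (succ_at i k))"
proof -
  have "0 < m i \<Longrightarrow> pred_at i m = k \<longleftrightarrow> m = succ_at i k" for m by auto
  then show ?thesis using fun_upd_in_idx[OF assms]
    by (auto simp: raise_op_def ket_def scal_def)
qed

section \<open>Invariant closed subspaces\<close>

lemma closed_subspace_lin:
  "closed_subspace n V \<Longrightarrow> f \<in> V \<Longrightarrow> g \<in> V \<Longrightarrow> (\<lambda>k. a * f k + b * g k) \<in> V"
  by (simp add: closed_subspace_def)

lemma closed_subspace_scal: "closed_subspace n V \<Longrightarrow> f \<in> V \<Longrightarrow> scal c f \<in> V"
  using closed_subspace_lin[of n V f f c 0] by (simp add: scal_def)

lemma closed_subspace_limit:
  assumes V: "closed_subspace n V" and g: "g \<in> l2 n" and h: "\<And>p. h p \<in> V"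
    and r: "\<bar>r\<bar> < 1" and dist: "\<And>p. l2_norm n (\<lambda>k. h p k - g k) \<le> r ^ p * C"
  shows "g \<in> V"
proof -
  have "\<exists>f\<in>V. l2_norm n (\<lambda>k. f k - g k) < e" if e: "0 < e" for e
  proof -
    have "(\<lambda>p. r ^ p * C) \<longlonglongrightarrow> 0"
      using LIMSEQ_power_zero[of r] r by (simp add: tendsto_mult_left_zero)
    then obtain p where "\<bar>r ^ p * C\<bar> < e"
      using LIMSEQ_D[OF _ e] by fastforce
    then have "l2_norm n (\<lambda>k. h p k - g k) < e" using dist[of p] by linarith
    then show ?thesis using h[of p] by blast
  qed
  then show ?thesis using V g by (simp add: closed_subspace_def)
qed

lemma closed_subspace_eq_l2:
  assumes V: "closed_subspace n V" and kets: "\<And>k. k \<in> idx n \<Longrightarrow> ket k \<in> V"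
  shows "V = l2 n"
proof
  show "V \<subseteq> l2 n" using V by (simp add: closed_subspace_def)
  have finite_support: "(\<lambda>k. if k \<in> F then g k else 0) \<in> V" if "finite F" "F \<subseteq> idx n" for F g
    using that
  proof (induction F rule: finite_induct)
    case empty
    then show ?case using V by (simp add: closed_subspace_def zero_vec_def)
  next
    case (insert x F)
    then have "(\<lambda>k. 1 * (if k \<in> F then g k else 0) + g x * ket x k) \<in> V"
      by (intro closed_subspace_lin[OF V] kets) auto
    moreover have "(\<lambda>k. 1 * (if k \<in> F then g k else 0) + g x * ket x k) = (\<lambda>k. if k \<in> insert x F then g k else 0)"
      using insert(2) by (auto simp: ket_def)
    ultimately show ?case by simp
  qed
  show "l2 n \<subseteq> V"
  proof
    fix g assume g: "g \<in> l2 n"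
    let ?G = "\<lambda>k. (cmod (g k))\<^sup>2"
    have "\<exists>f\<in>V. l2_norm n (\<lambda>k. f k - g k) < e" if e: "0 < e" for e
    proof -
      obtain F where F: "finite F" "F \<subseteq> idx n" "dist (sum ?G F) (infsum ?G (idx n)) \<le> e\<^sup>2 / 2"
        using infsum_finite_approximation[OF l2_summable[OF g], of "e\<^sup>2 / 2"] e by auto
      let ?f = "\<lambda>k. if k \<in> F then g k else 0"
      have "infsum (\<lambda>k. (cmod (?f k - g k))\<^sup>2) (idx n) = infsum ?G (idx n - F)"
        by (rule infsum_cong_neutral) auto
      also have "\<dots> = infsum ?G (idx n) - sum ?G F"
        using infsum_Diff[OF l2_summable[OF g] _ F(2)] F(1) by simp
      also have "\<dots> < e\<^sup>2"
        using abs_le_D2[OF F(3)[unfolded dist_real_def]] zero_less_power[OF e, of 2] by linarith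
      finally have "l2_norm n (\<lambda>k. ?f k - g k) < sqrt (e\<^sup>2)"
        unfolding l2_norm_def by (rule real_sqrt_less_mono)
      then show ?thesis using e finite_support[OF F(1,2)] by auto
    qed
    then show "g \<in> V" using V g by (simp add: closed_subspace_def)
  qed
qed

lemma lower_op_reaches_vacuum:
  assumes inv: "\<And>i f. i \<in> {1..n} \<Longrightarrow> f \<in> V \<Longrightarrow> lower_op n (a i) i f \<in> V"
    and a: "\<And>i k. i \<in> {1..n} \<Longrightarrow> 0 < k i \<Longrightarrow> a i k \<noteq> 0"
  shows "f \<in> V \<Longrightarrow> k \<in> idx n \<Longrightarrow> f k \<noteq> 0 \<Longrightarrow> \<exists>g\<in>V. g (\<lambda>_. 0) \<noteq> 0"
proof (induction "\<Sum>i = 1..n. k i" arbitrary: k f rule: less_induct)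
  case less
  show ?case
  proof (cases "k = (\<lambda>_. 0)")
    case True
    then show ?thesis using less.prems by blast
  next
    case False
    then obtain j where j: "j \<in> {1..n}" "0 < k j" using idx_nonzero_component less.prems(2) by blast
    have "lower_op n (a j) j f (pred_at j k) = of_real (a j k) * f k"
      using j pred_at_in_idx[OF less.prems(2)] by (simp add: lower_op_def succ_pred_at)
    then have "lower_op n (a j) j f (pred_at j k) \<noteq> 0" using a j less.prems(3) by simp
    moreover note less.hyps[OF sum_pred_at_less[where k = k, OF j] inv[OF j(1) less.prems(1)]
      pred_at_in_idx[OF less.prems(2)]]
    ultimately show ?thesis by blast
  qed
qed

lemma raise_op_generates_kets:
  assumes V: "closed_subspace n V"
    and inv: "\<And>i f. i \<in> {1..n} \<Longrightarrow> f \<in> V \<Longrightarrow> raise_op n (a i) i f \<in> V"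
    and a: "\<And>i k. i \<in> {1..n} \<Longrightarrow> 0 < k i \<Longrightarrow> a i k \<noteq> 0"
    and vacuum: "ket (\<lambda>_. 0) \<in> V"
  shows "k \<in> idx n \<Longrightarrow> ket k \<in> V"
proof (induction "\<Sum>i = 1..n. k i" arbitrary: k rule: less_induct)
  case less
  show ?case
  proof (cases "k = (\<lambda>_. 0)")
    case True
    then show ?thesis using vacuum by simp
  next
    case False
    then obtain j where j: "j \<in> {1..n}" "0 < k j" using idx_nonzero_component less.prems by blast
    let ?k' = "pred_at j k"
    have "ket ?k' \<in> V"
      using less.hyps[OF sum_pred_at_less[where k = k, OF j] pred_at_in_idx[OF less.prems]] .
    then have "scal (inverse (of_real (a j k))) (raise_op n (a j) j (ket ?k')) \<in> V"
      by (intro closed_subspace_scal[OF V] inv j(1))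
    moreover have "raise_op n (a j) j (ket ?k') = scal (of_real (a j k)) (ket k)"
      using raise_op_ket[OF pred_at_in_idx[OF less.prems] j(1)] j(2) by (simp add: succ_pred_at)
    ultimately show ?thesis using a[of j k] j by (simp add: scal_def mult.assoc[symmetric])
  qed
qed

lemma mult_op_funpow:
  "g \<in> l2 n \<Longrightarrow> (mult_op n d ^^ p) g = (\<lambda>k. if k \<in> idx n then d k ^ p * g k else 0)"
  by (induction p) (auto simp: mult_op_def l2_vanishes)

lemma mult_op_isolates_vacuum:
  assumes V: "closed_subspace n V" and inv: "\<And>f. f \<in> V \<Longrightarrow> mult_op n d f \<in> V"
    and d0: "cmod (d (\<lambda>_. 0)) = 1" and r: "0 \<le> r" "r < 1"
    and d: "\<And>k. k \<in> idx n \<Longrightarrow> k \<noteq> (\<lambda>_. 0) \<Longrightarrow> cmod (d k) \<le> r"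
    and g: "g \<in> V" "g (\<lambda>_. 0) \<noteq> 0"
  shows "ket (\<lambda>_. 0) \<in> V"
proof -
  let ?z = "\<lambda>_ :: nat. 0 :: nat"
  have z: "?z \<in> idx n" by (simp add: idx_def)
  have gl: "g \<in> l2 n" using V g(1) by (auto simp: closed_subspace_def)
  define h where "h p = scal (inverse (d ?z) ^ p) ((mult_op n d ^^ p) g)" for p
  have "(mult_op n d ^^ p) g \<in> V" for p by (induction p) (auto intro: inv g(1))
  then have hV: "h p \<in> V" for p unfolding h_def by (rule closed_subspace_scal[OF V])
  have "l2_norm n (\<lambda>k. h p k - scal (g ?z) (ket ?z) k) \<le> r ^ p * l2_norm n g" for p
  proof (rule l2_dominated(2)[OF gl zero_le_power[OF r(1)]])
    fix k
    show "k \<notin> idx n \<Longrightarrow> h p k - scal (g ?z) (ket ?z) k = 0"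
      using z by (auto simp: h_def scal_def ket_def mult_op_funpow[OF gl])
    assume k: "k \<in> idx n"
    show "cmod (h p k - scal (g ?z) (ket ?z) k) \<le> r ^ p * cmod (g k)"
    proof (cases "k = ?z")
      case True
      have "d ?z \<noteq> 0" using d0 by auto
      then have "h p ?z = g ?z"
        using z by (simp add: h_def scal_def mult_op_funpow[OF gl] mult.assoc[symmetric]
            power_mult_distrib[symmetric])
      then show ?thesis using True r(1) by (simp add: scal_def ket_def)
    next
      case False
      have "cmod (d k) ^ p \<le> r ^ p" by (rule power_mono[OF d[OF k False] norm_ge_zero])
      then show ?thesis using False k d0
        by (simp add: h_def scal_def ket_def mult_op_funpow[OF gl] norm_mult norm_power
            norm_inverse mult_right_mono)
    qed
  qed
  then have "scal (g ?z) (ket ?z) \<in> V"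
    using r by (intro closed_subspace_limit[OF V l2_scal[OF ket_in_l2[OF z]] hV]) auto
  then have "scal (inverse (g ?z)) (scal (g ?z) (ket ?z)) \<in> V" by (rule closed_subspace_scal[OF V])
  then show ?thesis using g(2) by (simp add: scal_def mult.assoc[symmetric])
qed

lemma invariant_closed_subspace_trivial:
  assumes V: "closed_subspace n V"
    and lower: "\<And>i f. i \<in> {1..n} \<Longrightarrow> f \<in> V \<Longrightarrow> lower_op n (a i) i f \<in> V"
    and raise: "\<And>i f. i \<in> {1..n} \<Longrightarrow> f \<in> V \<Longrightarrow> raise_op n (a i) i f \<in> V"
    and mult: "\<And>f. f \<in> V \<Longrightarrow> mult_op n d f \<in> V"
    and a: "\<And>i k. i \<in> {1..n} \<Longrightarrow> 0 < k i \<Longrightarrow> a i k \<noteq> 0"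
    and d0: "cmod (d (\<lambda>_. 0)) = 1" and r: "0 \<le> r" "r < 1"
    and d: "\<And>k. k \<in> idx n \<Longrightarrow> k \<noteq> (\<lambda>_. 0) \<Longrightarrow> cmod (d k) \<le> r"
  shows "V = {zero_vec} \<or> V = l2 n"
proof (cases "V \<subseteq> {zero_vec}")
  case True
  then show ?thesis using V by (auto simp: closed_subspace_def)
next
  case False
  then obtain f k where f: "f \<in> V" "f k \<noteq> 0" by (auto simp: zero_vec_def)
  then have "k \<in> idx n" using V l2_vanishes by (fastforce simp: closed_subspace_def)
  then obtain g where "g \<in> V" "g (\<lambda>_. 0) \<noteq> 0"
    using lower_op_reaches_vacuum[OF lower a f(1)] f(2) by blast
  then have "ket (\<lambda>_. 0) \<in> V" using mult_op_isolates_vacuum[OF V mult d0 r d] by blast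
  then have "V = l2 n"
    using closed_subspace_eq_l2[OF V] raise_op_generates_kets[OF V raise a] by blast
  then show ?thesis ..
qed

section \<open>The representation\<close>

locale sigma_rep =
  fixes q :: real and n :: nat and lam :: complex
  assumes q_pos: "0 < q" and q_less_1: "q < 1" and n_pos: "1 \<le> n" and lam_unit: "cmod lam = 1"
begin

definition coeff :: "nat \<Rightarrow> mindex \<Rightarrow> real" where
  "coeff i k = q ^ (\<Sum>j = 1..i - 1. k j) * sqrt (1 - q ^ ((if i = n then 4 else 2) * k i))"

definition eigen :: "mindex \<Rightarrow> complex" where
  "eigen k = lam * of_real (q ^ ((\<Sum>j = 1..n. k j) + k n))"

definition Y :: "nat \<Rightarrow> op" where
  "Y i = (if i \<le> n then lower_op n (coeff i) i else mult_op n eigen)"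

definition Ystar :: "nat \<Rightarrow> op" where
  "Ystar i = (if i \<le> n then raise_op n (coeff i) i else mult_op n (\<lambda>k. cnj (eigen k)))"

lemma q_power_le_1: "q ^ p \<le> 1"
  using q_pos q_less_1 by (simp add: power_le_one)

lemma coeff_nonneg: "0 \<le> coeff i k"
  using q_pos q_power_le_1 by (simp add: coeff_def)

lemma coeff_le_1: "coeff i k \<le> 1"
  using q_pos q_power_le_1 by (simp add: coeff_def mult_le_one)

lemma coeff_pos: "0 < k i \<Longrightarrow> 0 < coeff i k"
  using q_pos q_less_1 by (simp add: coeff_def power_less_one_iff)

lemma coeff_sq: "(coeff i k)\<^sup>2 = q ^ (2 * (\<Sum>j = 1..i - 1. k j)) * (1 - q ^ ((if i = n then 4 else 2) * k i))"
  using q_power_le_1 by (simp add: coeff_def power_mult_distrib power_mult[symmetric] mult.commute)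

lemma coeff_fun_upd_later: "i < l \<Longrightarrow> coeff i (k(l := v)) = coeff i k"
  unfolding coeff_def by (subst sum_fun_upd_notin) auto

lemma coeff_succ_at_earlier: "l \<in> {1..i - 1} \<Longrightarrow> coeff i (succ_at l k) = q * coeff i k"
  using sum_fun_upd_in[of "{1..i - 1}" l k "Suc (k l)"] by (auto simp: coeff_def)

lemma eigen_succ_at: "l \<in> {1..n - 1} \<Longrightarrow> eigen (succ_at l k) = of_real q * eigen k"
  using sum_fun_upd_in[of "{1..n}" l k "Suc (k l)"] by (auto simp: eigen_def)

lemma eigen_succ_at_last: "eigen (succ_at n k) = of_real q ^ 2 * eigen k"
  using sum_fun_upd_in[of "{1..n}" n k "Suc (k n)"] n_pos by (simp add: eigen_def power2_eq_square)

lemma norm_eigen: "cmod (eigen k) = q ^ ((\<Sum>j = 1..n. k j) + k n)"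
  using lam_unit q_pos by (simp add: eigen_def norm_mult norm_power)

lemma cnj_eigen_mult_eigen: "cnj (eigen k) * eigen k = of_real (q ^ (2 * ((\<Sum>j = 1..n. k j) + k n)))"
  by (simp add: complex_norm_square[symmetric] norm_eigen mult.commute flip: power_mult)

lemma Y_apply:
  "i \<le> n \<Longrightarrow> Y i f m = (if m \<in> idx n then of_real (coeff i (succ_at i m)) * f (succ_at i m) else 0)"
  by (simp add: Y_def lower_op_def)

lemma Ystar_apply:
  "i \<le> n \<Longrightarrow> Ystar i f m = (if m \<in> idx n \<and> 0 < m i then of_real (coeff i m) * f (pred_at i m) else 0)"
  by (simp add: Ystar_def raise_op_def)

lemma X_apply: "Xop n Y i f m = (if i = n \<and> m \<in> idx n then eigen m * f m else 0)"
  by (simp add: Xop_def Y_def mult_op_def zero_vec_def)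

lemma Xstar_apply: "Xop n Ystar i f m = (if i = n \<and> m \<in> idx n then cnj (eigen m) * f m else 0)"
  by (simp add: Xop_def Ystar_def mult_op_def zero_vec_def)

lemma X_X_commute:
  "i < j \<Longrightarrow> j \<le> n \<Longrightarrow> Xop n Y i (Xop n Y j f) m = inverse (of_real q) * Xop n Y j (Xop n Y i f) m"
  by (simp add: X_apply)

lemma X_Xstar_same:
  assumes "i \<le> n"
  shows "Xop n Y i (Xop n Ystar i f) m = Xop n Ystar i (Xop n Y i f) m
    + (1 - (of_real q)\<^sup>2) * (\<Sum>k = 1..i - 1. Xop n Ystar k (Xop n Y k f) m)"
proof -
  have "(\<Sum>k = 1..i - 1. Xop n Ystar k (Xop n Y k f) m) = 0"
    using assms by (intro sum.neutral) (auto simp: Xstar_apply)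
  then show ?thesis by (simp add: X_apply Xstar_apply)
qed

lemma X_Xstar_commute: "i \<noteq> j \<Longrightarrow> Xop n Y i (Xop n Ystar j f) m = of_real q * Xop n Ystar j (Xop n Y i f) m"
  by (simp add: X_apply Xstar_apply)

lemma X_Ystar_commute_lt:
  "i < j \<Longrightarrow> j \<le> n \<Longrightarrow> Xop n Y i (Ystar j f) m = of_real q * Ystar j (Xop n Y i f) m"
  by (simp add: X_apply Ystar_apply)

lemma Y_Y_commute:
  assumes i: "i \<in> {1..n}" and j: "j \<in> {1..n}" and ji: "j < i"
  shows "Y i (Y j f) m = inverse (of_real q) * Y j (Y i f) m"
proof (cases "m \<in> idx n")
  case True
  have "coeff j (succ_at j (succ_at i m)) = coeff j (succ_at j m)"
    using ji coeff_fun_upd_later[OF ji, of "succ_at j m"] by (simp add: fun_upd_twist)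
  moreover have "coeff i (succ_at i (succ_at j m)) = q * coeff i (succ_at i m)"
    using ji j coeff_succ_at_earlier[of j i "succ_at i m"] by (simp add: fun_upd_twist)
  moreover have "succ_at j (succ_at i m) = succ_at i (succ_at j m)"
    using ji by (simp add: fun_upd_twist)
  ultimately show ?thesis
    using i j True q_pos by (simp add: Y_apply fun_upd_in_idx)
qed (use i j in \<open>simp add: Y_apply\<close>)

lemma X_Y_commute:
  assumes i: "i \<in> {1..n}" and j: "j \<in> {1..n}" and ij: "i \<noteq> j"
  shows "Xop n Y i (Y j f) m = inverse (of_real q) * Y j (Xop n Y i f) m"
proof (cases "i = n \<and> m \<in> idx n")
  case True
  then have "eigen (succ_at j m) = of_real q * eigen m"
    using j ij by (intro eigen_succ_at) auto
  then show ?thesis using j True q_pos by (simp add: Y_apply X_apply fun_upd_in_idx)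
qed (use i j in \<open>auto simp: Y_apply X_apply\<close>)

lemma Y_X_same:
  assumes i: "i \<in> {1..n}"
  shows "Y i (Xop n Y i f) m = (of_real q)\<^sup>2 * Xop n Y i (Y i f) m
    + ((of_real q)\<^sup>2 - 1) * (\<Sum>k = 1..i - 1. (of_real q) ^ (i - k) * Xop n Y k (Y k f) m)"
proof -
  have "(\<Sum>k = 1..i - 1. (of_real q) ^ (i - k) * Xop n Y k (Y k f) m) = 0"
    using i by (intro sum.neutral) (auto simp: X_apply)
  moreover have "m \<in> idx n \<Longrightarrow> succ_at n m \<in> idx n"
    using n_pos by (auto intro: fun_upd_in_idx)
  ultimately show ?thesis
    using i by (auto simp: Y_apply X_apply eigen_succ_at_last)
qed

lemma X_Ystar_same:
  assumes i: "i \<in> {1..n}"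
  shows "Xop n Y i (Ystar i f) m = (of_real q)\<^sup>2 * Ystar i (Xop n Y i f) m"
proof (cases "i = n \<and> m \<in> idx n \<and> 0 < m n")
  case True
  then have "eigen m = of_real q ^ 2 * eigen (pred_at n m)"
    by (metis eigen_succ_at_last succ_pred_at)
  then show ?thesis using True pred_at_in_idx[of m n n] by (simp add: Ystar_apply X_apply)
qed (use i in \<open>auto simp: Ystar_apply X_apply\<close>)

lemma Y_Ystar_commute:
  assumes i: "i \<in> {1..n}" and j: "j \<in> {1..n}" and ij: "i \<noteq> j"
  shows "Y i (Ystar j f) m = of_real q * Ystar j (Y i f) m
    - ((of_real q)\<^sup>2 - 1) * of_real q ^ (2 * n + 2 - i - j) * Xop n Ystar i (Xop n Y j f) m"
proof (cases "m \<in> idx n \<and> 0 < m j")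
  case True
  then have m: "m \<in> idx n" and mj: "0 < m j" by simp_all
  let ?m' = "pred_at j m"
  have swap: "pred_at j (succ_at i m) = succ_at i ?m'"
    using ij by (auto simp: fun_eq_iff)
  have "Y i (Ystar j f) m
      = of_real (coeff i (succ_at i m)) * (of_real (coeff j (succ_at i m)) * f (pred_at j (succ_at i m)))"
    using i j ij m mj by (simp add: Y_apply Ystar_apply fun_upd_in_idx)
  then have lhs: "Y i (Ystar j f) m = of_real (coeff i (succ_at i m) * coeff j (succ_at i m)) * f (succ_at i ?m')"
    by (metis swap of_real_mult mult.assoc)
  have rhs: "Ystar j (Y i f) m = of_real (coeff j m * coeff i (succ_at i ?m')) * f (succ_at i ?m')"
    using i j m mj pred_at_in_idx[OF m] by (simp add: Y_apply Ystar_apply)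
  have "coeff i (succ_at i m) * coeff j (succ_at i m) = q * (coeff j m * coeff i (succ_at i ?m'))"
  proof (cases "i < j")
    case True
    have "succ_at i ?m' = (succ_at i m)(j := m j - 1)"
      using ij by (simp add: fun_upd_twist)
    then show ?thesis using i coeff_fun_upd_later[OF True] coeff_succ_at_earlier[of i j m] True
      by simp
  next
    case False
    with ij have "j < i" by simp
    have "coeff i (succ_at j (succ_at i ?m')) = q * coeff i (succ_at i ?m')"
      using \<open>j < i\<close> j by (intro coeff_succ_at_earlier) auto
    moreover have "succ_at j (succ_at i ?m') = succ_at i m"
      using mj ij by (auto simp: fun_eq_iff)
    ultimately show ?thesis using coeff_fun_upd_later[OF \<open>j < i\<close>] by simp
  qed
  moreover have "Xop n Ystar i (Xop n Y j f) m = 0"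
    using ij by (simp add: X_apply Xstar_apply)
  ultimately show ?thesis unfolding lhs rhs by simp
qed (use i j ij in \<open>auto simp: Y_apply Ystar_apply X_apply Xstar_apply\<close>)

lemma X_Ystar_commute_gt:
  assumes i: "i \<in> {1..n}" and j: "j \<in> {1..n}" and ji: "j < i"
  shows "Xop n Y i (Ystar j f) m = of_real q * Ystar j (Xop n Y i f) m
    + ((of_real q)\<^sup>2 - 1) * of_real q ^ (i - j) * Ystar i (Xop n Y j f) m"
proof (cases "i = n \<and> m \<in> idx n \<and> 0 < m j")
  case True
  then have "eigen m = of_real q * eigen (pred_at j m)"
    using j ji eigen_succ_at[of j "pred_at j m"] by (simp add: succ_pred_at)
  then show ?thesis using True i j ji pred_at_in_idx[of m n j] by (simp add: X_apply Ystar_apply)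
qed (use i j ji in \<open>auto simp: X_apply Ystar_apply\<close>)

lemma sum_coeff_sq:
  assumes "i < n"
  shows "(\<Sum>k = i + 1..n. (coeff k m)\<^sup>2) + q ^ (2 * ((\<Sum>j = 1..n. m j) + m n))
    = q ^ (2 * (\<Sum>j = 1..i. m j))"
proof -
  have "i \<le> n - 1" using assms by simp
  then show ?thesis
  proof (induction i rule: inc_induct)
    case base
    let ?S = "\<Sum>j = 1..n - 1. m j"
    have "(\<Sum>j = 1..n. m j) = ?S + m n" using sum_upto_last n_pos by blast
    moreover have "n - 1 + 1 = n" using n_pos by simp
    ultimately show ?case
      by (simp add: coeff_sq algebra_simps power_add flip: power_mult)
  next
    case (step i)
    let ?S = "\<Sum>j = 1..i. m j"
    have "(\<Sum>k = i + 1..n. (coeff k m)\<^sup>2) = (coeff (Suc i) m)\<^sup>2 + (\<Sum>k = Suc i + 1..n. (coeff k m)\<^sup>2)"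
      using step.hyps by (simp add: sum.atLeast_Suc_atMost)
    moreover have "(coeff (Suc i) m)\<^sup>2 = q ^ (2 * ?S) * (1 - q ^ (2 * m (Suc i)))"
      using step.hyps by (simp add: coeff_sq)
    moreover have "q ^ (2 * (\<Sum>j = 1..Suc i. m j)) = q ^ (2 * ?S) * q ^ (2 * m (Suc i))"
      by (simp add: power_add flip: power_mult)
    ultimately show ?case using step.IH by (simp add: algebra_simps)
  qed
qed

lemma coeff_succ_at_sq:
  fixes m :: mindex
  assumes i: "i \<in> {1..n}"
  defines "D \<equiv> q ^ (2 * ((\<Sum>j = 1..n. m j) + m n))"
  shows "(coeff i (succ_at i m))\<^sup>2 = (coeff i m)\<^sup>2
    + (1 - q\<^sup>2) * (q ^ (2 * (n + 1 - i)) * (if i = n then D else 0) + D + (\<Sum>k = i + 1..n. (coeff k m)\<^sup>2))"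
proof -
  let ?P = "q ^ (2 * (\<Sum>j = 1..i - 1. m j))"
  have S: "(\<Sum>j = 1..i. m j) = (\<Sum>j = 1..i - 1. m j) + m i" using i sum_upto_last by auto
  have "sum (succ_at i m) {1..i - 1} = sum m {1..i - 1}" by (rule sum_fun_upd_notin) auto
  then have succ: "(coeff i (succ_at i m))\<^sup>2 = ?P * (1 - q ^ ((if i = n then 4 else 2) * Suc (m i)))"
    by (simp only: coeff_sq fun_upd_same)
  show ?thesis
  proof (cases "i = n")
    case True
    let ?M = "q ^ (4 * m n)"
    have "D = ?P * ?M"
      using S True by (simp add: D_def power_add algebra_simps flip: power_mult)
    moreover have "(coeff i (succ_at i m))\<^sup>2 = ?P * (1 - ?M * q ^ 4)"
      using succ True by (simp add: power_add mult.commute)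
    moreover have "(coeff i m)\<^sup>2 = ?P * (1 - ?M)"
      using coeff_sq[of i m] True by simp
    moreover have "P * (1 - M * q ^ 4) = P * (1 - M) + (1 - q\<^sup>2) * (q\<^sup>2 * (P * M) + P * M)" for P M :: real
      by algebra
    ultimately show ?thesis using True by simp
  next
    case False
    let ?M = "q ^ (2 * m i)"
    have "(\<Sum>k = i + 1..n. (coeff k m)\<^sup>2) + D = ?P * ?M"
      using False i S sum_coeff_sq[of i m] by (simp add: D_def power_add flip: power_mult)
    moreover have "(coeff i (succ_at i m))\<^sup>2 = ?P * (1 - ?M * q\<^sup>2)"
      using succ False by (simp add: power_add mult.commute power2_eq_square)
    moreover have "(coeff i m)\<^sup>2 = ?P * (1 - ?M)"
      using coeff_sq[of i m] False by simp
    moreover have "R + D = P * M \<Longrightarrow> P * (1 - M * q\<^sup>2) = P * (1 - M) + (1 - q\<^sup>2) * (D + R)"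
      for P M D R :: real
      by (simp add: algebra_simps)
    ultimately show ?thesis using False by simp
  qed
qed

lemma Ystar_Y_apply:
  assumes "i \<in> {1..n}" "m \<in> idx n"
  shows "Ystar i (Y i f) m = of_real ((coeff i m)\<^sup>2) * f m"
proof (cases "0 < m i")
  case True
  then show ?thesis using assms pred_at_in_idx[of m n i] by (simp add: Y_apply Ystar_apply power2_eq_square)
qed (use assms in \<open>simp add: Ystar_apply coeff_def\<close>)

lemma Y_Ystar_apply: "i \<in> {1..n} \<Longrightarrow> m \<in> idx n \<Longrightarrow> Y i (Ystar i f) m = of_real ((coeff i (succ_at i m))\<^sup>2) * f m"
  by (simp add: Y_apply Ystar_apply fun_upd_in_idx power2_eq_square)

lemma Xstar_X_apply: "m \<in> idx n \<Longrightarrow>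
    Xop n Ystar k (Xop n Y k f) m = (if k = n then of_real (q ^ (2 * ((\<Sum>j = 1..n. m j) + m n))) * f m else 0)"
  by (simp add: X_apply Xstar_apply mult.assoc[symmetric] cnj_eigen_mult_eigen)

lemma Y_Ystar_same:
  assumes i: "i \<in> {1..n}"
  shows "Y i (Ystar i f) m = Ystar i (Y i f) m
    + (1 - (of_real q)\<^sup>2) * ((of_real q) ^ (2 * (n + 1 - i)) * Xop n Ystar i (Xop n Y i f) m
                          + (\<Sum>k = 1..n. Xop n Ystar k (Xop n Y k f) m)
                          + (\<Sum>k = i + 1..n. Ystar k (Y k f) m))"
proof (cases "m \<in> idx n")
  case True
  let ?D = "q ^ (2 * ((\<Sum>j = 1..n. m j) + m n))"
  let ?R = "\<Sum>k = i + 1..n. (coeff k m)\<^sup>2"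
  have "(\<Sum>k = 1..n. Xop n Ystar k (Xop n Y k f) m) = of_real ?D * f m"
    using True n_pos by (simp add: Xstar_X_apply)
  moreover have "(\<Sum>k = i + 1..n. Ystar k (Y k f) m) = of_real ?R * f m"
    using True i by (simp add: Ystar_Y_apply sum_distrib_right)
  moreover have "Xop n Ystar i (Xop n Y i f) m = of_real (if i = n then ?D else 0) * f m"
    using True by (simp add: Xstar_X_apply)
  ultimately show ?thesis
    using True i by (simp add: Y_Ystar_apply Ystar_Y_apply coeff_succ_at_sq algebra_simps)
qed (use i in \<open>simp add: Y_apply Ystar_apply X_apply Xstar_apply\<close>)

lemma sum_Xstar_X_Ystar_Y:
  assumes f: "f \<in> l2 n"
  shows "(\<Sum>i = 1..n. Xop n Ystar i (Xop n Y i f) m + Ystar i (Y i f) m) = f m"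
proof (cases "m \<in> idx n")
  case True
  have "(\<Sum>i = 1..n. Xop n Ystar i (Xop n Y i f) m + Ystar i (Y i f) m)
      = of_real (q ^ (2 * ((\<Sum>j = 1..n. m j) + m n)) + (\<Sum>k = 0 + 1..n. (coeff k m)\<^sup>2)) * f m"
    using True n_pos by (simp add: sum.distrib Xstar_X_apply Ystar_Y_apply sum_distrib_left algebra_simps)
  also have "\<dots> = f m"
  proof -
    have "q ^ (2 * ((\<Sum>j = 1..n. m j) + m n)) + (\<Sum>k = 0 + 1..n. (coeff k m)\<^sup>2) = 1"
      using sum_coeff_sq[of 0 m] n_pos by simp
    then show ?thesis by (metis mult_1 of_real_1)
  qed
  finally show ?thesis .
qed (use l2_vanishes[OF f] in \<open>simp add: Y_apply Ystar_apply X_apply Xstar_apply\<close>)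

lemma sphere_relations_Y: "sphere_relations n q (Xop n Y) Y (Xop n Ystar) Ystar"
  unfolding sphere_relations_def Let_def
proof (intro ballI allI conjI impI)
  fix f m assume "f \<in> l2 n"
  then show "(\<Sum>i = 1..n. Xop n Ystar i (Xop n Y i f) m + Ystar i (Y i f) m) = f m"
    by (rule sum_Xstar_X_Ystar_Y)
qed (simp_all add: X_X_commute Y_Y_commute X_Y_commute Y_X_same X_Xstar_same Y_Ystar_same X_Ystar_same
  X_Xstar_commute Y_Ystar_commute X_Ystar_commute_lt X_Ystar_commute_gt)

lemma Y_bounded_adjoint:
  assumes "i \<in> {1..n + 1}"
  shows "bounded_op n (Y i) \<and> bounded_op n (Ystar i) \<and> is_adjoint n (Y i) (Ystar i)"
proof (cases "i \<le> n")
  case True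
  then have i: "i \<in> {1..n}" using assms by simp
  have bound: "\<bar>coeff i k\<bar> \<le> 1" for k using coeff_nonneg coeff_le_1 by simp
  show ?thesis
    using True bounded_lower_op[OF i bound] bounded_raise_op[OF i bound] adjoint_lower_raise_op[OF i]
    by (simp add: Y_def Ystar_def)
next
  case False
  have bound: "cmod (eigen k) \<le> 1" for k by (simp add: norm_eigen q_power_le_1)
  then have bound_cnj: "cmod (cnj (eigen k)) \<le> 1" for k by simp
  show ?thesis
    using False bounded_mult_op[of eigen, OF bound] bounded_mult_op[of "\<lambda>k. cnj (eigen k)", OF bound_cnj]
      adjoint_mult_op
    by (simp add: Y_def Ystar_def)
qed

lemma Y_ket: "i \<in> {1..n} \<Longrightarrow> k \<in> idx n \<Longrightarrow> Y i (ket k) = scal (of_real (coeff i k)) (ket_minus k i)"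
  by (simp add: Y_def lower_op_ket)

lemma Y_last_ket: "k \<in> idx n \<Longrightarrow> Y (n + 1) (ket k) = scal (eigen k) (ket k)"
  by (auto simp: Y_def mult_op_def scal_def ket_def)

lemma norm_eigen_le_q:
  assumes "k \<in> idx n" "k \<noteq> (\<lambda>_. 0)"
  shows "cmod (eigen k) \<le> q"
proof -
  obtain j where j: "j \<in> {1..n}" "0 < k j" using idx_nonzero_component[OF assms] .
  then have "1 \<le> (\<Sum>j = 1..n. k j) + k n"
    using member_le_sum[of j "{1..n}" k] by simp
  then show ?thesis
    using power_decreasing[of 1 _ q] q_pos q_less_1 by (simp add: norm_eigen)
qed

lemma Y_invariant_subspace_trivial:
  assumes V: "closed_subspace n V" and inv: "\<forall>i\<in>{1..n + 1}. \<forall>f\<in>V. Y i f \<in> V \<and> Ystar i f \<in> V"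
  shows "V = {zero_vec} \<or> V = l2 n"
proof (rule invariant_closed_subspace_trivial[OF V, where a = coeff and d = eigen and r = q])
  show "lower_op n (coeff i) i f \<in> V" "raise_op n (coeff i) i f \<in> V"
    if "i \<in> {1..n}" "f \<in> V" for i f
  proof -
    have "Y i f \<in> V \<and> Ystar i f \<in> V" using inv that by auto
    then show "lower_op n (coeff i) i f \<in> V" "raise_op n (coeff i) i f \<in> V"
      using that by (simp_all add: Y_def Ystar_def)
  qed
  show "mult_op n eigen f \<in> V" if "f \<in> V" for f
    using inv that by (force simp: Y_def)
  show "coeff i k \<noteq> 0" if "0 < k i" for i k
    using coeff_pos[of k i] that by simp
  show "cmod (eigen (\<lambda>_. 0)) = 1"
    by (simp add: norm_eigen)
qed (use q_pos q_less_1 norm_eigen_le_q in auto)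

end

theorem proposition1p2:
  fixes q :: real and n :: nat and lam :: complex
  assumes "0 < q" and "q < 1" and "n \<ge> 1" and "cmod lam = 1"
  shows "\<exists>T S :: nat \<Rightarrow> op.
    (\<forall>i\<in>{1..n+1}. bounded_op n (T i) \<and> bounded_op n (S i) \<and> is_adjoint n (T i) (S i)) \<and>
    (\<forall>i\<in>{1..n-1}. \<forall>k\<in>idx n. T i (ket k) =
        scal (complex_of_real (q ^ (\<Sum>j = 1..i - 1. k j) * sqrt (1 - q ^ (2 * k i)))) (ket_minus k i)) \<and>
    (\<forall>k\<in>idx n. T n (ket k) =
        scal (complex_of_real (q ^ (\<Sum>j = 1..n - 1. k j) * sqrt (1 - q ^ (4 * k n)))) (ket_minus k n)) \<and>
    (\<forall>k\<in>idx n. T (n + 1) (ket k) =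
        scal (lam * complex_of_real (q ^ ((\<Sum>j = 1..n. k j) + k n))) (ket k)) \<and>
    sphere_relations n q (Xop n T) T (Xop n S) S \<and>
    (\<forall>V. closed_subspace n V \<and>
         (\<forall>i\<in>{1..n+1}. \<forall>f\<in>V. T i f \<in> V \<and> S i f \<in> V)
         \<longrightarrow> V = {zero_vec} \<or> V = l2 n)"
proof -
  interpret sigma_rep q n lam
    using assms by unfold_locales auto
  show ?thesis
  proof (intro exI conjI ballI allI impI)
    show "bounded_op n (Y i)" "bounded_op n (Ystar i)" "is_adjoint n (Y i) (Ystar i)" if "i \<in> {1..n + 1}" for i
      using Y_bounded_adjoint[OF that] by simp_all
    show "Y i (ket k) = scal (of_real (q ^ (\<Sum>j = 1..i - 1. k j) * sqrt (1 - q ^ (2 * k i)))) (ket_minus k i)"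
      if "i \<in> {1..n - 1}" "k \<in> idx n" for i k
      using that Y_ket[of i k] by (auto simp: coeff_def)
    show "Y n (ket k) = scal (of_real (q ^ (\<Sum>j = 1..n - 1. k j) * sqrt (1 - q ^ (4 * k n)))) (ket_minus k n)"
      if "k \<in> idx n" for k
      using that Y_ket[of n k] n_pos by (simp add: coeff_def)
    show "Y (n + 1) (ket k) = scal (lam * of_real (q ^ ((\<Sum>j = 1..n. k j) + k n))) (ket k)"
      if "k \<in> idx n" for k
      using Y_last_ket[OF that] by (simp add: eigen_def)
    show "sphere_relations n q (Xop n Y) Y (Xop n Ystar) Ystar"
      by (rule sphere_relations_Y)
    show "V = {zero_vec} \<or> V = l2 n"
      if "closed_subspace n V \<and> (\<forall>i\<in>{1..n + 1}. \<forall>f\<in>V. Y i f \<in> V \<and> Ystar i f \<in> V)" for V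
      using Y_invariant_subspace_trivial that by blast
  qed
qed

end
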